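(* Let $e_1,\dots,e_n>0$ with $\sum_ie_i=1$, let $d\in\mathbb{R}_+^n$ be reported demands and $a$ the MMF allocation, and suppose $a_i<d_i$ for some agent $i$. Then, keeping all other agents' reported demands fixed, agent $i$'s MMF allocation is the same value $a_i$ for every report $d_i'\ge a_i$.
   Context: MMF$(e,d)$: set $r=1$, $E=1$, $S=\{1,\dots,n\}$, $a=0$; process agents $j$ in ascending order of $d_j/e_j$; if $d_j<re_j/E$, set $a_j=d_j$, remove $j$ from $S$, $r\leftarrow r-d_j$, $E\leftarrow E-e_j$ and continue; otherwise set $a_k=re_k/E$ for all $k\in S$ and stop; output $a$. *)

theory Defs
  imports Complex_Main
begin

text \<open>Agents are indexed 0..n-1.  mmf_proc e d r E js processes the agents of the list js
  (already sorted by d_j/e_j) with remaining resource r and remaining entitlement E.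
  The output is the allocation vector a (value 0 for indices not in the list).\<close>

fun mmf_proc :: "(nat \<Rightarrow> real) \<Rightarrow> (nat \<Rightarrow> real) \<Rightarrow> real \<Rightarrow> real \<Rightarrow> nat list \<Rightarrow> nat \<Rightarrow> real" where
  "mmf_proc e d r E [] = (\<lambda>_. 0)"
| "mmf_proc e d r E (j # js) =
     (if d j < r * e j / E
      then (mmf_proc e d (r - d j) (E - e j) js)(j := d j)
      else (\<lambda>k. if k \<in> set (j # js) then r * e k / E else 0))"

definition MMF :: "nat \<Rightarrow> (nat \<Rightarrow> real) \<Rightarrow> (nat \<Rightarrow> real) \<Rightarrow> nat \<Rightarrow> real" where
  "MMF n e d = mmf_proc e d 1 1 (sort_key (\<lambda>j. d j / e j) [0..<n])"

end

theory Submission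
  imports Defs
begin

text \<open>MMF is water-filling: unless every demand is met, there is a level l such that each
  agent k receives min (d k) (l * e k) and these amounts exhaust the resource.  Each term
  is monotone in l, so any two levels that exhaust the resource give every agent the same
  amount.  If agent i is capped, i.e. receives l * e i < d i, then any report d' \<ge> l * e i
  leaves every term at level l unchanged; so l is still a valid level for the new reports,
  and agent i again receives l * e i.\<close>

definition water_fill :: "(nat \<Rightarrow> real) \<Rightarrow> (nat \<Rightarrow> real) \<Rightarrow> real \<Rightarrow> nat \<Rightarrow> real" where
  "water_fill e d l k = min (d k) (l * e k)"

lemma water_fill_mono:
  assumes "l \<le> l'" "e k \<ge> 0"
  shows "water_fill e d l k \<le> water_fill e d l' k"
  using assms unfolding water_fill_def by (simp add: min.coboundedI2 mult_right_mono)

lemma water_fill_unique: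
  assumes "finite K" "\<forall>k\<in>K. e k \<ge> 0"
    and "(\<Sum>k\<in>K. water_fill e d l k) = r" "(\<Sum>k\<in>K. water_fill e d l' k) = r"
    and "k \<in> K"
  shows "water_fill e d l k = water_fill e d l' k"
proof -
  have "water_fill e d l k = water_fill e d l' k" if "l \<le> l'"
    "(\<Sum>k\<in>K. water_fill e d l k) = (\<Sum>k\<in>K. water_fill e d l' k)" for l l'
  proof -
    have "\<And>i. i \<in> K \<Longrightarrow> water_fill e d l i \<le> water_fill e d l' i"
      using water_fill_mono[OF that(1)] assms(2) by simp
    then show ?thesis
      using sum_mono_inv[OF that(2)] assms(1,5) by blast
  qed
  then show ?thesis
    using assms(3,4) by (metis linorder_le_cases)
qed

lemma mmf_proc_stop:
  assumes "sorted (map (\<lambda>k. d k / e k) (j # js))" "\<forall>k\<in>set (j # js). e k > 0"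
    and E: "E = (\<Sum>k\<in>set (j # js). e k)" and stop: "\<not> d j < r * e j / E"
  shows "\<forall>k\<in>set (j # js). mmf_proc e d r E (j # js) k = water_fill e d (r / E) k"
    and "(\<Sum>k\<in>set (j # js). water_fill e d (r / E) k) = r"
proof -
  have "E > 0"
    unfolding E using assms(2) by (intro sum_pos) auto
  have capped: "water_fill e d (r / E) k = r * e k / E" if "k \<in> set (j # js)" for k
  proof -
    have "r / E \<le> d j / e j"
      using stop \<open>E > 0\<close> assms(2) by (simp add: field_simps)
    also have "\<dots> \<le> d k / e k"
      using assms(1) that by auto
    finally show ?thesis
      using assms(2) that by (auto simp: water_fill_def min_def field_simps)
  qed
  then show "\<forall>k\<in>set (j # js). mmf_proc e d r E (j # js) k = water_fill e d (r / E) k"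
    using stop by simp
  have "(\<Sum>k\<in>set (j # js). water_fill e d (r / E) k) = (\<Sum>k\<in>set (j # js). r * e k / E)"
    using capped by (intro sum.cong) auto
  also have "\<dots> = r * (\<Sum>k\<in>set (j # js). e k) / E"
    by (simp add: sum_distrib_left sum_divide_distrib)
  finally have "(\<Sum>k\<in>set (j # js). water_fill e d (r / E) k) = r * E / E"
    using E by simp
  then show "(\<Sum>k\<in>set (j # js). water_fill e d (r / E) k) = r"
    using \<open>E > 0\<close> by simp
qed

text \<open>The bound on the level is the invariant of the induction: every agent processed
  before the stop had d j < (r / E) * e j, so it is not capped at any later, higher level.\<close>

lemma mmf_proc_water_filling:
  assumes "sorted (map (\<lambda>k. d k / e k) js)" "distinct js" "\<forall>k\<in>set js. e k > 0"
    and "E = (\<Sum>k\<in>set js. e k)" "r > 0"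
  shows "(\<forall>k\<in>set js. mmf_proc e d r E js k = d k) \<and> (\<Sum>k\<in>set js. d k) < r
    \<or> (\<exists>l \<ge> r / E. (\<forall>k\<in>set js. mmf_proc e d r E js k = water_fill e d l k)
                   \<and> (\<Sum>k\<in>set js. water_fill e d l k) = r)"
  using assms
proof (induction js arbitrary: r E)
  case Nil
  then show ?case by simp
next
  case (Cons j js)
  show ?case
  proof (cases "d j < r * e j / E")
    case False
    then show ?thesis
      using mmf_proc_stop[OF Cons.prems(1,3,4) False] by blast
  next
    case True
    have "e j > 0" "j \<notin> set js"
      using Cons.prems(2,3) by auto
    have E': "E - e j = (\<Sum>k\<in>set js. e k)"
      using Cons.prems(4) \<open>j \<notin> set js\<close> by simp
    have "(\<Sum>k\<in>set js. e k) \<ge> 0"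
      using Cons.prems(3) by (simp add: sum_nonneg less_imp_le)
    then have "E \<ge> e j"
      using E' by linarith
    then have "E > 0" "r * e j / E \<le> r"
      using \<open>e j > 0\<close> Cons.prems(5) by (auto simp: field_simps)
    then have "r - d j > 0"
      using True by linarith
    have step: "mmf_proc e d r E (j # js) = (mmf_proc e d (r - d j) (E - e j) js)(j := d j)"
      using True by simp
    from Cons.IH[OF _ _ _ E' \<open>r - d j > 0\<close>] Cons.prems(1-3)
    consider "\<forall>k\<in>set js. mmf_proc e d (r - d j) (E - e j) js k = d k"
        "(\<Sum>k\<in>set js. d k) < r - d j"
      | l where "l \<ge> (r - d j) / (E - e j)"
          "\<forall>k\<in>set js. mmf_proc e d (r - d j) (E - e j) js k = water_fill e d l k"
          "(\<Sum>k\<in>set js. water_fill e d l k) = r - d j"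
      by auto
    then show ?thesis
    proof cases
      case 1
      then show ?thesis
        using step \<open>j \<notin> set js\<close> by auto
    next
      case (2 l)
      have "js \<noteq> []"
        using 2(3) \<open>r - d j > 0\<close> by auto
      then have "E - e j > 0"
        using E' Cons.prems(3) by (simp add: sum_pos)
      then have "r / E \<le> (r - d j) / (E - e j)"
        using True \<open>E > 0\<close> by (simp add: field_simps)
      then have "r / E \<le> l"
        using 2(1) by linarith
      have "d j < r / E * e j"
        using True by simp
      also have "\<dots> \<le> l * e j"
        using mult_right_mono[OF \<open>r / E \<le> l\<close>, of "e j"] \<open>e j > 0\<close> by simp
      finally have "d j < l * e j" .
      then have "water_fill e d l j = d j"
        by (simp add: water_fill_def)
      then show ?thesis
        using 2 step \<open>j \<notin> set js\<close> \<open>r / E \<le> l\<close> by (intro disjI2 exI[of _ l]) auto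
    qed
  qed
qed

lemma MMF_water_filling:
  assumes "\<And>j. j < n \<Longrightarrow> e j > 0" "(\<Sum>j<n. e j) = 1"
  shows "(\<forall>k<n. MMF n e d k = d k) \<and> (\<Sum>k<n. d k) < 1
    \<or> (\<exists>l. (\<forall>k<n. MMF n e d k = water_fill e d l k) \<and> (\<Sum>k<n. water_fill e d l k) = 1)"
proof -
  define js where "js = sort_key (\<lambda>j. d j / e j) [0..<n]"
  have "set js = {..<n}"
    unfolding js_def by auto
  moreover have "sorted (map (\<lambda>j. d j / e j) js)" "distinct js"
    unfolding js_def by (auto intro: sorted_sort_key)
  ultimately show ?thesis
    using mmf_proc_water_filling[of d e js 1 1] assms
    unfolding MMF_def js_def[symmetric] by auto
qed

theorem mainTheorem15:
  fixes n :: nat and e d :: "nat \<Rightarrow> real" and i :: nat and d' :: real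
  assumes e_pos: "\<And>j. j < n \<Longrightarrow> e j > 0"
    and e_sum: "(\<Sum>j<n. e j) = 1"
    and d_nonneg: "\<And>j. j < n \<Longrightarrow> d j \<ge> 0"
    and i_lt: "i < n"
    and short: "MMF n e d i < d i"
    and d'_ge: "d' \<ge> MMF n e d i"
  shows "MMF n e (d(i := d')) i = MMF n e d i"
proof -
  obtain l where alloc: "\<forall>k<n. MMF n e d k = water_fill e d l k"
    and total: "(\<Sum>k<n. water_fill e d l k) = 1"
    using MMF_water_filling[OF e_pos e_sum, of d] short i_lt by auto
  have capped: "MMF n e d i = l * e i"
    using alloc short i_lt by (auto simp: water_fill_def min_def split: if_splits)
  have same_fill: "water_fill e (d(i := d')) l = water_fill e d l"
    using capped d'_ge short by (auto simp: water_fill_def min_def)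
  have "(\<Sum>k<n. water_fill e (d(i := d')) l k) \<le> (\<Sum>k<n. (d(i := d')) k)"
    by (intro sum_mono) (simp add: water_fill_def)
  then obtain l' where alloc': "\<forall>k<n. MMF n e (d(i := d')) k = water_fill e (d(i := d')) l' k"
    and total': "(\<Sum>k<n. water_fill e (d(i := d')) l' k) = 1"
    using MMF_water_filling[OF e_pos e_sum, of "d(i := d')"] same_fill total by auto
  have "water_fill e (d(i := d')) l' i = water_fill e (d(i := d')) l i"
    using water_fill_unique[of "{..<n}" e _ l' 1 l] e_pos total' total same_fill i_lt
    by (auto simp: less_imp_le)
  then show ?thesis
    using alloc alloc' same_fill i_lt by simp
qed

end
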